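(* Consider $n$ agents $\mathcal{V}=\{1,\dots,n\}$ with Lagrangian dynamics $M_i(q_i)\ddot q_i+C_i(q_i,\dot q_i)\dot q_i=\tau_i$, $q_i\in\mathbb{R}^m$, with $M_i(q_i)$ symmetric positive definite. Let $\mathcal{X}_1,\dots,\mathcal{X}_n\subseteq\mathbb{R}^m$ be closed convex sets with $\mathcal{X}_0=\bigcap_{i}\mathcal{X}_i$ nonempty and bounded. Let $\sigma:[t_0,\infty)\to\mathcal{P}$ be a piecewise constant switching signal taking values in a finite set $\mathcal{P}$ of undirected graphs on $\mathcal{V}$, with switching times $t_0<t_1<t_2<\dots$ satisfying $\inf_l(t_{l+1}-t_l)\ge\tau_d>0$; let $\mathcal{N}_i(\sigma(t))$ be the neighbor set of $i$ in $\mathcal{G}_{\sigma(t)}$. Let $a_{ij}(t)=a_{ji}(t)$ be continuous weights with $a_*\le a_{ij}(t)\le a^*$ for all $i,j$ and all $t\ge0$, where $a_*,a^*>0$ are constants. Apply the control $$\tau_i=C_i(q_i,\dot q_i)\dot q_i-kM_i(q_i)\dot q_i-M_i(q_i)(q_i-P_{\mathcal{X}_i}(q_i))-M_i(q_i)\sum_{j\in\mathcal{N}_i(\sigma(t))}a_{ij}(t)(q_i-q_j),$$ so that the closed loop is $\ddot q_i=-k\dot q_i-\sum_{j\in\mathcal{N}_i(\sigma(t))}a_{ij}(t)(q_i-q_j)-(q_i-P_{\mathcal{X}_i}(q_i))$. Then for all sufficiently large $k>0$, every solution satisfies $\lim_{t\to\infty}\|q_i(t)\|_{\mathcal{X}_i}=0$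 and $\lim_{t\to\infty}\dot q_i(t)=0$ for all $i\in\mathcal{V}$.
   Context: $\|\cdot\|$ is the Euclidean norm, $\|x\|_{\mathcal{S}}=\inf_{y\in\mathcal{S}}\|x-y\|$, and $P_{\mathcal{S}}(x)$ is the Euclidean projection of $x$ onto a closed convex set $\mathcal{S}$. *)

theory Defs
  imports "HOL-Analysis.Analysis"
begin

definition undirected_graph :: "('v \<Rightarrow> 'v \<Rightarrow> bool) \<Rightarrow> bool" where
  "undirected_graph G \<longleftrightarrow> (\<forall>i j. G i j = G j i) \<and> (\<forall>i. \<not> G i i)"

definition nbrs :: "('v \<Rightarrow> 'v \<Rightarrow> bool) \<Rightarrow> 'v \<Rightarrow> 'v set" where
  "nbrs G i = {j. G i j}"

definition sym_pos_def :: "real^'m^'m \<Rightarrow> bool" where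
  "sym_pos_def A \<longleftrightarrow> transpose A = A \<and> (\<forall>y. y \<noteq> 0 \<longrightarrow> y \<bullet> (A *v y) > 0)"

end

theory Submission
  imports Defs
begin

text \<open>
  Fix a point \<open>p\<close> of the common set \<open>\<Inter>i. X i\<close> and consider the energy
  \<open>V = \<Sum>i. \<parallel>q\<^sub>i' + (k/2)(q\<^sub>i - p)\<parallel>\<^sup>2/2 + k\<^sup>2/8 \<parallel>q\<^sub>i - p\<parallel>\<^sup>2\<close>.
  Along solutions its derivative is at most \<open>-\<beta> \<Sum>i. \<parallel>q\<^sub>i'\<parallel>\<^sup>2 + \<parallel>q\<^sub>i - P\<^sub>i(q\<^sub>i)\<parallel>\<^sup>2\<close> with \<open>\<beta> > 0\<close>:
  Young's inequality handles the cross terms, the projection inequality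
  \<open>\<parallel>q - P(q)\<parallel>\<^sup>2 \<le> \<langle>q - p, q - P(q)\<rangle>\<close> the residuals, and the Laplacian bound
  \<open>\<parallel>L x\<parallel>\<^sup>2 \<le> 2 n a\<^sup>* \<langle>x, L x\<rangle>\<close> the coupling as soon as \<open>k\<^sup>2 \<ge> 8 n a\<^sup>*\<close>.
  So \<open>V\<close> decreases (a bounded interval contains only finitely many switches), the
  trajectories stay bounded, velocities and residuals are Lipschitz, and a Barbalat-type
  argument drives both to zero.
\<close>

lemma decreasing_if_deriv_nonpos_off_finite:
  fixes f f' :: "real \<Rightarrow> real"
  assumes "finite S" "a \<le> b" "continuous_on {a..b} f"
    and "\<And>x. x \<in> {a<..<b} - S \<Longrightarrow> (f has_real_derivative f' x) (at x)"
    and "\<And>x. x \<in> {a<..<b} - S \<Longrightarrow> f' x \<le> 0"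
  shows "f b \<le> f a"
proof -
  let ?g = "\<lambda>x. if x \<in> S then 0 else f' x"
  have "(?g has_integral (f b - f a)) {a..b}"
    by (rule fundamental_theorem_of_calculus_interior_strong[OF assms(1-2) _ assms(3)])
       (use assms(4) in \<open>auto simp: has_real_derivative_iff_has_vector_derivative\<close>)
  then have "(?g has_integral (f b - f a)) {a<..<b}"
    by (simp add: has_integral_Icc_iff_Ioo)
  then have "f b - f a \<le> 0"
    by (rule has_integral_le[OF _ has_integral_0]) (use assms(5) in auto)
  then show ?thesis by simp
qed

lemma norm_diff_le_if_vector_derivative_bound_off_finite:
  fixes f f' :: "real \<Rightarrow> 'a::banach"
  assumes "finite S" "a \<le> b" "continuous_on {a..b} f"
    and "\<And>x. x \<in> {a<..<b} - S \<Longrightarrow> (f has_vector_derivative f' x) (at x)"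
    and "\<And>x. x \<in> {a<..<b} - S \<Longrightarrow> norm (f' x) \<le> B" and "0 \<le> B"
  shows "norm (f b - f a) \<le> B * (b - a)"
proof -
  let ?g = "\<lambda>x. if x \<in> S \<union> {a,b} then 0 else f' x"
  have integral: "(?g has_integral (f b - f a)) (cbox a b)"
    unfolding box_real
    by (rule fundamental_theorem_of_calculus_interior_strong[of "S \<union> {a,b}"])
       (use assms in auto)
  have bound: "norm (?g x) \<le> B" if "x \<in> cbox a b" for x
    using that assms(5,6) by auto
  from has_integral_bound[OF assms(6) integral bound] assms(2) show ?thesis
    by simp
qed

lemma has_real_derivative_power2_norm:
  fixes f :: "real \<Rightarrow> 'a::real_inner"
  assumes "(f has_vector_derivative f') (at t)"
  shows "((\<lambda>t. (norm (f t))\<^sup>2) has_real_derivative 2 * inner (f t) f') (at t)"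
proof -
  have "((\<lambda>t. inner (f t) (f t)) has_vector_derivative inner (f t) f' + inner f' (f t)) (at t)"
    by (rule bounded_bilinear.has_vector_derivative[OF bounded_bilinear_inner assms assms])
  then show ?thesis
    by (simp add: power2_norm_eq_inner has_real_derivative_iff_has_vector_derivative inner_commute)
qed

lemma tendsto_zero_if_Lipschitz_and_energy_decay:
  fixes V \<phi> :: "real \<Rightarrow> real"
  assumes V_nonneg: "\<And>t. T \<le> t \<Longrightarrow> 0 \<le> V t"
    and \<phi>_nonneg: "\<And>t. T \<le> t \<Longrightarrow> 0 \<le> \<phi> t"
    and \<phi>_Lipschitz: "\<And>s t. T \<le> s \<Longrightarrow> s \<le> t \<Longrightarrow> \<bar>\<phi> t - \<phi> s\<bar> \<le> L * (t - s)"
    and "0 \<le> L" "0 < \<beta>"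
    and decay: "\<And>a b c. T \<le> a \<Longrightarrow> a \<le> b \<Longrightarrow> 0 \<le> c \<Longrightarrow> (\<forall>t\<in>{a..b}. c \<le> \<phi> t) \<Longrightarrow>
      V b \<le> V a - \<beta> * c\<^sup>2 * (b - a)"
  shows "(\<phi> \<longlongrightarrow> 0) at_top"
proof (rule tendstoI)
  fix \<epsilon> :: real assume "0 < \<epsilon>"
  have V_antimono: "V t \<le> V s" if "T \<le> s" "s \<le> t" for s t
    using decay[of s t 0] that \<phi>_nonneg by auto
  define V_inf where "V_inf = Inf (V ` {T..})"
  have bdd: "bdd_below (V ` {T..})"
    using V_nonneg by (auto intro!: bdd_belowI[of _ 0])
  have V_inf_le: "V_inf \<le> V t" if "T \<le> t" for t
    unfolding V_inf_def by (rule cInf_lower) (use that bdd in auto)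
  define \<delta> where "\<delta> = \<epsilon> / (2 * (L + 1))"
  define \<eta> where "\<eta> = \<beta> * (\<epsilon>/2)\<^sup>2 * \<delta>"
  have "0 < \<delta>" "0 < \<eta>"
    using \<open>0 < \<epsilon>\<close> \<open>0 \<le> L\<close> \<open>0 < \<beta>\<close> by (simp_all add: \<delta>_def \<eta>_def)
  then obtain N where N: "T \<le> N" "V N < V_inf + \<eta>"
    using cInf_less_iff[OF _ bdd, of "V_inf + \<eta>"] by (auto simp: V_inf_def)
  \<comment> \<open>if \<phi> t \<ge> \<epsilon> late, then \<phi> \<ge> \<epsilon>/2 on [t, t + \<delta>] and V drops by \<eta> below its infimum\<close>
  have "\<phi> t < \<epsilon>" if "N \<le> t" for t
  proof (rule ccontr)
    assume "\<not> \<phi> t < \<epsilon>"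
    have "\<epsilon>/2 \<le> \<phi> s" if "s \<in> {t..t+\<delta>}" for s
    proof -
      have "\<bar>\<phi> s - \<phi> t\<bar> \<le> L * (s - t)"
        using \<phi>_Lipschitz[of t s] that \<open>N \<le> t\<close> N(1) by simp
      also have "\<dots> \<le> L * \<delta>"
        using that \<open>0 \<le> L\<close> by (intro mult_left_mono) auto
      also have "\<dots> \<le> \<epsilon>/2"
        using \<open>0 < \<epsilon>\<close> \<open>0 \<le> L\<close> by (simp add: \<delta>_def field_simps)
      finally show ?thesis using \<open>\<not> \<phi> t < \<epsilon>\<close> by linarith
    qed
    then have "V (t + \<delta>) \<le> V t - \<eta>"
      using decay[of t "t + \<delta>" "\<epsilon>/2"] \<open>N \<le> t\<close> N(1) \<open>0 < \<delta>\<close> \<open>0 < \<epsilon>\<close> by (simp add: \<eta>_def)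
    also have "\<dots> \<le> V N - \<eta>"
      using V_antimono[of N t] \<open>N \<le> t\<close> N(1) by simp
    also have "\<dots> < V_inf"
      using N(2) by simp
    finally show False
      using V_inf_le[of "t + \<delta>"] \<open>N \<le> t\<close> N(1) \<open>0 < \<delta>\<close> by simp
  qed
  then show "\<forall>\<^sub>F t in at_top. dist (\<phi> t) 0 < \<epsilon>"
    unfolding eventually_at_top_linorder using \<phi>_nonneg N(1)
    by (intro exI[of _ N]) (auto simp: dist_real_def)
qed

lemma minus_inner_add_le:
  fixes u g h :: "'a::real_inner"
  assumes "0 < k"
  shows "- inner u (g + h) \<le> k/4 * (norm u)\<^sup>2 + 2/k * ((norm g)\<^sup>2 + (norm h)\<^sup>2)"
proof -
  have square: "(norm ((k/2) *\<^sub>R u + (g + h)))\<^sup>2 = k\<^sup>2/4 * (norm u)\<^sup>2 + k * inner u (g + h) + (norm (g + h))\<^sup>2"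
    unfolding power2_norm_eq_inner
    by (simp add: inner_add_left inner_add_right inner_commute algebra_simps power2_eq_square)
  have parallelogram: "(norm (g + h))\<^sup>2 + (norm (g - h))\<^sup>2 = 2 * (norm g)\<^sup>2 + 2 * (norm h)\<^sup>2"
    by (simp add: power2_norm_eq_inner inner_add inner_diff inner_commute algebra_simps)
  have "- k * inner u (g + h) \<le> k\<^sup>2/4 * (norm u)\<^sup>2 + (2 * (norm g)\<^sup>2 + 2 * (norm h)\<^sup>2)"
    using square parallelogram
      zero_le_power2[of "norm ((k/2) *\<^sub>R u + (g + h))"] zero_le_power2[of "norm (g - h)"]
    by linarith
  then have "k * (- inner u (g + h)) \<le> k * (k/4 * (norm u)\<^sup>2 + 2/k * ((norm g)\<^sup>2 + (norm h)\<^sup>2))"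
    using assms by (simp add: algebra_simps power2_eq_square)
  then show ?thesis using assms mult_le_cancel_left_pos[of k "- inner u (g + h)"] by simp
qed

lemma closest_point_inner_ge:
  fixes X :: "'a::euclidean_space set"
  assumes "convex X" "closed X" "p \<in> X"
  shows "(norm (z - closest_point X z))\<^sup>2 \<le> inner (z - p) (z - closest_point X z)"
  using closest_point_dot[OF assms, of z]
  by (simp add: power2_norm_eq_inner inner_diff inner_commute algebra_simps)

lemma laplacian_quadratic_form:
  fixes x :: "'v::finite \<Rightarrow> 'a::real_inner" and c :: "'v \<Rightarrow> 'v \<Rightarrow> real"
  assumes "\<And>i j. c i j = c j i"
  shows "(\<Sum>i\<in>UNIV. inner (x i) (\<Sum>j\<in>UNIV. c i j *\<^sub>R (x i - x j)))
    = (\<Sum>i\<in>UNIV. \<Sum>j\<in>UNIV. c i j * (norm (x i - x j))\<^sup>2) / 2"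
proof -
  define Q where "Q = (\<Sum>i\<in>UNIV. \<Sum>j\<in>UNIV. c i j * inner (x i) (x i - x j))"
  have Q_swap: "Q = (\<Sum>i\<in>UNIV. \<Sum>j\<in>UNIV. c i j * inner (x j) (x j - x i))"
    unfolding Q_def by (subst sum.swap) (simp add: assms)
  have "2 * Q = Q + Q" by simp
  also have "\<dots> = (\<Sum>i\<in>UNIV. \<Sum>j\<in>UNIV. c i j * (inner (x i) (x i - x j) + inner (x j) (x j - x i)))"
    by (subst (2) Q_swap) (simp add: Q_def sum.distrib[symmetric] distrib_left)
  also have "\<dots> = (\<Sum>i\<in>UNIV. \<Sum>j\<in>UNIV. c i j * (norm (x i - x j))\<^sup>2)"
    by (simp add: power2_norm_eq_inner inner_diff algebra_simps inner_commute)
  finally show ?thesis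
    by (simp add: Q_def inner_sum_right)
qed

lemma laplacian_norm_sq_le:
  fixes x :: "'v::finite \<Rightarrow> 'a::real_normed_vector" and c :: "'v \<Rightarrow> 'v \<Rightarrow> real" and A :: real
  assumes "\<And>i j. 0 \<le> c i j" "\<And>i j. c i j \<le> A"
  shows "(\<Sum>i\<in>UNIV. (norm (\<Sum>j\<in>UNIV. c i j *\<^sub>R (x i - x j)))\<^sup>2)
    \<le> CARD('v) * A * (\<Sum>i\<in>UNIV. \<Sum>j\<in>UNIV. c i j * (norm (x i - x j))\<^sup>2)"
proof -
  have "(norm (\<Sum>j\<in>UNIV. c i j *\<^sub>R (x i - x j)))\<^sup>2 \<le> CARD('v) * A * (\<Sum>j\<in>UNIV. c i j * (norm (x i - x j))\<^sup>2)" for i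
  proof -
    have "norm (\<Sum>j\<in>UNIV. c i j *\<^sub>R (x i - x j)) \<le> (\<Sum>j\<in>UNIV. c i j * norm (x i - x j))"
      by (rule order_trans[OF norm_sum]) (simp add: assms(1))
    then have "(norm (\<Sum>j\<in>UNIV. c i j *\<^sub>R (x i - x j)))\<^sup>2 \<le> (\<Sum>j\<in>UNIV. c i j * norm (x i - x j))\<^sup>2"
      by (simp add: power_mono)
    also have "\<dots> \<le> (\<Sum>j\<in>UNIV. (c i j * norm (x i - x j))\<^sup>2) * CARD('v)"
      by (rule sum_squared_le_sum_of_squares)
    also have "\<dots> \<le> (\<Sum>j\<in>UNIV. A * (c i j * (norm (x i - x j))\<^sup>2)) * CARD('v)"
    proof (intro mult_right_mono sum_mono)
      fix j
      have "(c i j * norm (x i - x j))\<^sup>2 = c i j * (c i j * (norm (x i - x j))\<^sup>2)"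
        by (simp add: power2_eq_square)
      also have "\<dots> \<le> A * (c i j * (norm (x i - x j))\<^sup>2)"
        using assms by (intro mult_right_mono) auto
      finally show "(c i j * norm (x i - x j))\<^sup>2 \<le> A * (c i j * (norm (x i - x j))\<^sup>2)" .
    qed simp
    finally show ?thesis
      by (simp add: sum_distrib_left mult_ac)
  qed
  then have "(\<Sum>i\<in>UNIV. (norm (\<Sum>j\<in>UNIV. c i j *\<^sub>R (x i - x j)))\<^sup>2)
      \<le> (\<Sum>i\<in>UNIV. CARD('v) * A * (\<Sum>j\<in>UNIV. c i j * (norm (x i - x j))\<^sup>2))"
    by (rule sum_mono)
  then show ?thesis
    by (simp add: sum_distrib_left)
qed

text \<open>
  The closed loop from time \<open>T\<close> on: \<open>E t\<close> is the active graph, \<open>w\<close> the weights, and \<open>S\<close>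
  the switching instants, where the acceleration may jump.
\<close>

locale projected_consensus =
  fixes X :: "'v::finite \<Rightarrow> 'a::euclidean_space set"
    and p :: 'a
    and E :: "real \<Rightarrow> 'v \<Rightarrow> 'v \<Rightarrow> bool"
    and w :: "'v \<Rightarrow> 'v \<Rightarrow> real \<Rightarrow> real"
    and A k T :: real
    and S :: "real set"
    and q dq :: "'v \<Rightarrow> real \<Rightarrow> 'a"
  assumes X_closed: "closed (X i)" and X_convex: "convex (X i)" and p_in_X: "p \<in> X i"
    and E_sym: "T \<le> t \<Longrightarrow> E t i j = E t j i"
    and w_sym: "w i j t = w j i t"
    and w_nonneg: "T \<le> t \<Longrightarrow> 0 \<le> w i j t"
    and w_le: "T \<le> t \<Longrightarrow> w i j t \<le> A"
    and k_gt_2: "2 < k"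
    and k_large: "8 * CARD('v) * A \<le> k\<^sup>2"
    and S_finite: "finite (S \<inter> {a..b})"
    and q_cont: "continuous_on {T..} (q i)"
    and dq_cont: "continuous_on {T..} (dq i)"
    and q_deriv: "T < t \<Longrightarrow> (q i has_vector_derivative dq i t) (at t)"
    and dq_deriv: "T < t \<Longrightarrow> t \<notin> S \<Longrightarrow> (dq i has_vector_derivative
      - k *\<^sub>R dq i t - (q i t - closest_point (X i) (q i t))
      - (\<Sum>j\<in>nbrs (E t) i. w i j t *\<^sub>R (q i t - q j t))) (at t)"
begin

definition residual :: "'v \<Rightarrow> real \<Rightarrow> 'a" where
  "residual i t = q i t - closest_point (X i) (q i t)"

definition coupling :: "'v \<Rightarrow> real \<Rightarrow> 'a" where
  "coupling i t = (\<Sum>j\<in>nbrs (E t) i. w i j t *\<^sub>R (q i t - q j t))"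

definition offset :: "'v \<Rightarrow> real \<Rightarrow> 'a" where
  "offset i t = q i t - p"

definition adjacency :: "real \<Rightarrow> 'v \<Rightarrow> 'v \<Rightarrow> real" where
  "adjacency t i j = (if E t i j then w i j t else 0)"

definition energy :: "real \<Rightarrow> real" where
  "energy t = (\<Sum>i\<in>UNIV. (norm (dq i t + (k/2) *\<^sub>R offset i t))\<^sup>2 / 2 + k\<^sup>2/8 * (norm (offset i t))\<^sup>2)"

definition energy_rate :: "real \<Rightarrow> real" where
  "energy_rate t = (\<Sum>i\<in>UNIV. - (k/2) * (norm (dq i t))\<^sup>2 - inner (dq i t) (residual i t + coupling i t)
     - (k/2) * inner (offset i t) (residual i t + coupling i t))"

definition dissipation :: "real \<Rightarrow> real" where
  "dissipation t = (\<Sum>i\<in>UNIV. (norm (dq i t))\<^sup>2 + (norm (residual i t))\<^sup>2)"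

definition decay_rate :: real where
  "decay_rate = min (k/4) (k/2 - 2/k)"

lemma decay_rate_pos: "0 < decay_rate"
proof -
  have "4 < k * k" using mult_strict_mono[of 2 k 2 k] k_gt_2 by simp
  then have "2/k < k/2" using k_gt_2 by (simp add: field_simps)
  then show ?thesis using k_gt_2 by (simp add: decay_rate_def)
qed

lemma A_nonneg: "0 \<le> A"
  using w_nonneg[of T] w_le[of T] by (blast intro: order_trans)

lemma dq_has_derivative:
  "T < t \<Longrightarrow> t \<notin> S \<Longrightarrow> (dq i has_vector_derivative - k *\<^sub>R dq i t - residual i t - coupling i t) (at t)"
  using dq_deriv by (simp add: residual_def coupling_def)

lemma coupling_eq_laplacian: "coupling i t = (\<Sum>j\<in>UNIV. adjacency t i j *\<^sub>R (offset i t - offset j t))"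
proof -
  have "coupling i t = (\<Sum>j\<in>UNIV. if E t i j then w i j t *\<^sub>R (q i t - q j t) else 0)"
    unfolding coupling_def nbrs_def by (simp add: sum.inter_filter[symmetric])
  then show ?thesis
    by (auto intro!: sum.cong simp: adjacency_def offset_def)
qed

lemma coupling_work_eq:
  assumes "T \<le> t"
  shows "(\<Sum>i\<in>UNIV. inner (offset i t) (coupling i t))
    = (\<Sum>i\<in>UNIV. \<Sum>j\<in>UNIV. adjacency t i j * (norm (offset i t - offset j t))\<^sup>2) / 2"
  unfolding coupling_eq_laplacian
  by (rule laplacian_quadratic_form) (use assms E_sym w_sym in \<open>simp add: adjacency_def\<close>)

lemma coupling_norm_sq_le:
  assumes "T \<le> t"
  shows "(\<Sum>i\<in>UNIV. (norm (coupling i t))\<^sup>2) \<le> 2 * CARD('v) * A * (\<Sum>i\<in>UNIV. inner (offset i t) (coupling i t))"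
proof -
  have "(\<Sum>i\<in>UNIV. (norm (coupling i t))\<^sup>2)
      \<le> CARD('v) * A * (\<Sum>i\<in>UNIV. \<Sum>j\<in>UNIV. adjacency t i j * (norm (offset i t - offset j t))\<^sup>2)"
    unfolding coupling_eq_laplacian
    by (rule laplacian_norm_sq_le) (use assms w_nonneg w_le A_nonneg in \<open>auto simp: adjacency_def\<close>)
  then show ?thesis
    by (simp add: coupling_work_eq[OF assms])
qed

lemma energy_has_derivative:
  assumes "T < t" "t \<notin> S"
  shows "(energy has_real_derivative energy_rate t) (at t)"
proof -
  have offset_deriv: "(offset i has_vector_derivative dq i t) (at t)" for i
    using q_deriv[OF assms(1)] by (auto simp: offset_def[abs_def] intro!: derivative_eq_intros)
  have "((\<lambda>t. dq i t + (k/2) *\<^sub>R offset i t) has_vector_derivative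
      - (k/2) *\<^sub>R dq i t - residual i t - coupling i t) (at t)" for i
  proof (rule has_vector_derivative_eq_rhs)
    show "((\<lambda>t. dq i t + (k/2) *\<^sub>R offset i t) has_vector_derivative
      (- k *\<^sub>R dq i t - residual i t - coupling i t) + (k/2) *\<^sub>R dq i t) (at t)"
      by (intro has_vector_derivative_add bounded_linear.has_vector_derivative[OF bounded_linear_scaleR_right]
          dq_has_derivative assms offset_deriv)
    have "- k *\<^sub>R dq i t + (k/2) *\<^sub>R dq i t = - (k/2) *\<^sub>R dq i t"
      using scaleR_left_distrib[of "- k" "k/2" "dq i t"] by simp
    then show "(- k *\<^sub>R dq i t - residual i t - coupling i t) + (k/2) *\<^sub>R dq i t
      = - (k/2) *\<^sub>R dq i t - residual i t - coupling i t"
      by (simp add: algebra_simps)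
  qed
  from DERIV_add[OF DERIV_cdivide[OF has_real_derivative_power2_norm[OF this]]
      DERIV_cmult[OF has_real_derivative_power2_norm[OF offset_deriv]]]
  have "(energy has_real_derivative (\<Sum>i\<in>UNIV.
      2 * inner (dq i t + (k/2) *\<^sub>R offset i t) (- (k/2) *\<^sub>R dq i t - residual i t - coupling i t) / 2
      + k\<^sup>2/8 * (2 * inner (offset i t) (dq i t)))) (at t)"
    unfolding energy_def[abs_def] by (rule DERIV_sum)
  also have "(\<Sum>i\<in>UNIV. 2 * inner (dq i t + (k/2) *\<^sub>R offset i t) (- (k/2) *\<^sub>R dq i t - residual i t - coupling i t) / 2
      + k\<^sup>2/8 * (2 * inner (offset i t) (dq i t))) = energy_rate t"
    unfolding energy_rate_def
    by (intro sum.cong refl)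
      (simp add: inner_add_left inner_add_right inner_diff_right inner_commute power2_norm_eq_inner
        field_simps power2_eq_square, simp add: dot_square_norm power2_eq_square)
  finally show ?thesis .
qed

lemma coupling_absorbed:
  assumes "T \<le> t"
  shows "2/k * (\<Sum>i\<in>UNIV. (norm (coupling i t))\<^sup>2) \<le> k/2 * (\<Sum>i\<in>UNIV. inner (offset i t) (coupling i t))"
proof -
  define W where "W = (\<Sum>i\<in>UNIV. inner (offset i t) (coupling i t))"
  have "0 \<le> W"
    unfolding W_def coupling_work_eq[OF assms]
    using w_nonneg[OF assms] by (auto simp: adjacency_def intro!: sum_nonneg)
  have "2/k * (\<Sum>i\<in>UNIV. (norm (coupling i t))\<^sup>2) \<le> 2/k * (2 * CARD('v) * A * W)"
    unfolding W_def using coupling_norm_sq_le[OF assms] k_gt_2 by (intro mult_left_mono) auto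
  also have "\<dots> = (4 * CARD('v) * A / k) * W"
    by simp
  also have "\<dots> \<le> k/2 * W"
    using k_large k_gt_2 \<open>0 \<le> W\<close> by (intro mult_right_mono) (simp_all add: field_simps power2_eq_square)
  finally show ?thesis
    unfolding W_def .
qed

lemma energy_rate_le:
  assumes "T \<le> t"
  shows "energy_rate t \<le> - decay_rate * dissipation t"
proof -
  define U where "U = (\<Sum>i\<in>UNIV. (norm (dq i t))\<^sup>2)"
  define R where "R = (\<Sum>i\<in>UNIV. (norm (residual i t))\<^sup>2)"
  define H where "H = (\<Sum>i\<in>UNIV. (norm (coupling i t))\<^sup>2)"
  define W\<^sub>R where "W\<^sub>R = (\<Sum>i\<in>UNIV. inner (offset i t) (residual i t))"
  define W\<^sub>H where "W\<^sub>H = (\<Sum>i\<in>UNIV. inner (offset i t) (coupling i t))"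
  have "energy_rate t \<le> (\<Sum>i\<in>UNIV. - (k/4) * (norm (dq i t))\<^sup>2
      + 2/k * ((norm (residual i t))\<^sup>2 + (norm (coupling i t))\<^sup>2)
      - (k/2) * inner (offset i t) (residual i t) - (k/2) * inner (offset i t) (coupling i t))"
    unfolding energy_rate_def
    using minus_inner_add_le[of k "dq _ t" "residual _ t" "coupling _ t"] k_gt_2
    by (intro sum_mono) (simp add: inner_add_right algebra_simps)
  also have "\<dots> = - (k/4) * U + 2/k * R + 2/k * H - (k/2) * W\<^sub>R - (k/2) * W\<^sub>H"
    by (simp add: U_def R_def H_def W\<^sub>R_def W\<^sub>H_def sum.distrib sum_subtractf sum_negf sum_distrib_left algebra_simps)
  finally have "energy_rate t \<le> - (k/4) * U + 2/k * R + 2/k * H - (k/2) * W\<^sub>R - (k/2) * W\<^sub>H" .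
  moreover have "(k/2) * R \<le> (k/2) * W\<^sub>R"
    unfolding R_def W\<^sub>R_def residual_def offset_def using k_gt_2
    by (intro mult_left_mono sum_mono closest_point_inner_ge X_convex X_closed p_in_X) auto
  moreover have "2/k * H \<le> (k/2) * W\<^sub>H"
    unfolding H_def W\<^sub>H_def by (rule coupling_absorbed[OF assms])
  ultimately have "energy_rate t \<le> - (k/4) * U - ((k/2) * R - 2/k * R)"
    by linarith
  then have rate: "energy_rate t \<le> - (k/4) * U - (k/2 - 2/k) * R"
    by (simp add: left_diff_distrib)
  have "decay_rate \<le> k/4" "decay_rate \<le> k/2 - 2/k"
    unfolding decay_rate_def by (rule min.cobounded1, rule min.cobounded2)
  moreover have "0 \<le> U" "0 \<le> R"
    by (simp_all add: U_def R_def sum_nonneg)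
  ultimately have "decay_rate * U \<le> (k/4) * U" "decay_rate * R \<le> (k/2 - 2/k) * R"
    by (metis mult_right_mono)+
  with rate show ?thesis
    by (simp add: dissipation_def U_def R_def sum.distrib algebra_simps)
qed

lemma energy_nonneg: "0 \<le> energy t"
  by (simp add: energy_def sum_nonneg)

lemma dissipation_nonneg: "0 \<le> dissipation t"
  by (simp add: dissipation_def sum_nonneg)

lemma energy_continuous_on: "T \<le> a \<Longrightarrow> continuous_on {a..b} energy"
  unfolding energy_def[abs_def] offset_def
  by (intro continuous_intros continuous_on_subset[OF q_cont] continuous_on_subset[OF dq_cont]) auto

lemma energy_decay:
  assumes "T \<le> a" "a \<le> b" "\<forall>t\<in>{a..b}. c\<^sup>2 \<le> dissipation t"
  shows "energy b \<le> energy a - decay_rate * c\<^sup>2 * (b - a)"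
proof -
  have "energy b + decay_rate * c\<^sup>2 * b \<le> energy a + decay_rate * c\<^sup>2 * a"
  proof (rule decreasing_if_deriv_nonpos_off_finite[OF S_finite assms(2)])
    show "continuous_on {a..b} (\<lambda>t. energy t + decay_rate * c\<^sup>2 * t)"
      by (intro continuous_intros energy_continuous_on assms(1))
  next
    fix t assume t: "t \<in> {a<..<b} - S \<inter> {a..b}"
    then show "((\<lambda>t. energy t + decay_rate * c\<^sup>2 * t) has_real_derivative energy_rate t + decay_rate * c\<^sup>2) (at t)"
      using assms(1) by (auto intro!: derivative_eq_intros energy_has_derivative)
    have "decay_rate * c\<^sup>2 \<le> decay_rate * dissipation t"
      using t assms(3) decay_rate_pos by (intro mult_left_mono) auto
    then show "energy_rate t + decay_rate * c\<^sup>2 \<le> 0"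
      using energy_rate_le[of t] t assms(1) by simp
  qed
  then show ?thesis by (simp add: algebra_simps)
qed

lemma energy_antimono: "T \<le> a \<Longrightarrow> a \<le> b \<Longrightarrow> energy b \<le> energy a"
  using energy_decay[of a b 0] dissipation_nonneg by simp

lemma trajectory_bounded:
  obtains B where "0 \<le> B"
    and "\<And>i t. T \<le> t \<Longrightarrow> norm (offset i t) \<le> B" and "\<And>i t. T \<le> t \<Longrightarrow> norm (dq i t) \<le> B"
proof
  define B\<^sub>0 where "B\<^sub>0 = sqrt (8 * energy T / k\<^sup>2)"
  define B\<^sub>1 where "B\<^sub>1 = sqrt (2 * energy T)"
  have energy_term_le: "(norm (dq i t + (k/2) *\<^sub>R offset i t))\<^sup>2 / 2 + k\<^sup>2/8 * (norm (offset i t))\<^sup>2 \<le> energy T"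
    if "T \<le> t" for i t
    using member_le_sum[of i UNIV "\<lambda>i. (norm (dq i t + (k/2) *\<^sub>R offset i t))\<^sup>2 / 2 + k\<^sup>2/8 * (norm (offset i t))\<^sup>2"]
      energy_antimono[OF order_refl that]
    by (simp add: energy_def add_nonneg_nonneg)
  have offset_le: "norm (offset i t) \<le> B\<^sub>0" if "T \<le> t" for i t
  proof -
    have "k\<^sup>2/8 * (norm (offset i t))\<^sup>2 \<le> energy T"
      using energy_term_le[OF that, of i] zero_le_power2[of "norm (dq i t + (k/2) *\<^sub>R offset i t)"] by linarith
    then have "(norm (offset i t))\<^sup>2 \<le> 8 * energy T / k\<^sup>2"
      using k_gt_2 by (simp add: field_simps)
    then show ?thesis unfolding B\<^sub>0_def by (rule real_le_rsqrt)
  qed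
  have s_le: "norm (dq i t + (k/2) *\<^sub>R offset i t) \<le> B\<^sub>1" if "T \<le> t" for i t
  proof -
    have "(norm (dq i t + (k/2) *\<^sub>R offset i t))\<^sup>2 \<le> 2 * energy T"
    proof -
      have "0 \<le> k\<^sup>2/8 * (norm (offset i t))\<^sup>2"
        by simp
      then show ?thesis
        using energy_term_le[OF that, of i] by linarith
    qed
    then show ?thesis unfolding B\<^sub>1_def by (rule real_le_rsqrt)
  qed
  have dq_le: "norm (dq i t) \<le> B\<^sub>1 + (k/2) * B\<^sub>0" if "T \<le> t" for i t
  proof -
    have "norm (dq i t) \<le> norm (dq i t + (k/2) *\<^sub>R offset i t) + (k/2) * norm (offset i t)"
      using norm_triangle_ineq4[of "dq i t + (k/2) *\<^sub>R offset i t" "(k/2) *\<^sub>R offset i t"] k_gt_2 by simp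
    moreover have "(k/2) * norm (offset i t) \<le> (k/2) * B\<^sub>0"
      using offset_le[OF that] k_gt_2 by (intro mult_left_mono) auto
    ultimately show ?thesis
      using s_le[OF that, of i] by linarith
  qed
  have "0 \<le> B\<^sub>0" "0 \<le> B\<^sub>1" "0 \<le> (k/2) * B\<^sub>0"
    using k_gt_2 energy_nonneg[of T] by (simp_all add: B\<^sub>0_def B\<^sub>1_def)
  then show "0 \<le> B\<^sub>1 + (k/2 + 1) * B\<^sub>0"
    by (simp add: algebra_simps)
  show "norm (offset i t) \<le> B\<^sub>1 + (k/2 + 1) * B\<^sub>0" "norm (dq i t) \<le> B\<^sub>1 + (k/2 + 1) * B\<^sub>0"
    if "T \<le> t" for i t
    using offset_le[OF that, of i] dq_le[OF that, of i] \<open>0 \<le> B\<^sub>0\<close> \<open>0 \<le> B\<^sub>1\<close> \<open>0 \<le> (k/2) * B\<^sub>0\<close>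
    by (simp_all add: algebra_simps)
qed

lemma residual_norm_le: "norm (residual i t) \<le> norm (offset i t)"
  using closest_point_le[OF X_closed p_in_X, of "q i t"]
  by (simp add: residual_def offset_def dist_norm norm_minus_commute)

lemma coupling_norm_le:
  assumes "T \<le> t" "\<And>j. norm (offset j t) \<le> B"
  shows "norm (coupling i t) \<le> CARD('v) * (A * (2 * B))"
proof -
  have "norm (coupling i t) \<le> (\<Sum>j\<in>UNIV. norm (adjacency t i j *\<^sub>R (offset i t - offset j t)))"
    unfolding coupling_eq_laplacian by (rule norm_sum)
  also have "\<dots> \<le> CARD('v) * (A * (2 * B))"
  proof (rule sum_bounded_above)
    fix j
    have "norm (offset i t - offset j t) \<le> 2 * B"
      using norm_triangle_ineq4[of "offset i t" "offset j t"] assms(2)[of i] assms(2)[of j] by linarith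
    moreover have "0 \<le> adjacency t i j" "adjacency t i j \<le> A"
      using assms(1) w_nonneg w_le A_nonneg by (simp_all add: adjacency_def)
    ultimately show "norm (adjacency t i j *\<^sub>R (offset i t - offset j t)) \<le> A * (2 * B)"
      by (simp add: mult_mono)
  qed
  finally show ?thesis .
qed

lemma velocity_Lipschitz:
  obtains L where "0 \<le> L"
    and "\<And>i s t. T \<le> s \<Longrightarrow> s \<le> t \<Longrightarrow> norm (dq i t - dq i s) \<le> L * (t - s)"
proof -
  obtain B where B: "0 \<le> B"
    "\<And>i t. T \<le> t \<Longrightarrow> norm (offset i t) \<le> B" "\<And>i t. T \<le> t \<Longrightarrow> norm (dq i t) \<le> B"
    using trajectory_bounded by metis
  define L where "L = k * B + B + CARD('v) * (A * (2 * B))"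
  have acceleration_le: "norm (- k *\<^sub>R dq i t - residual i t - coupling i t) \<le> L" if "T \<le> t" for i t
  proof -
    have "norm (- k *\<^sub>R dq i t - residual i t - coupling i t)
        \<le> k * norm (dq i t) + norm (residual i t) + norm (coupling i t)"
      using norm_triangle_ineq4[of "- k *\<^sub>R dq i t - residual i t" "coupling i t"]
        norm_triangle_ineq4[of "- k *\<^sub>R dq i t" "residual i t"] k_gt_2 by simp
    also have "\<dots> \<le> L"
    proof -
      have "k * norm (dq i t) \<le> k * B"
        using B(3)[OF that] k_gt_2 by (intro mult_left_mono) auto
      moreover have "norm (residual i t) \<le> B"
        using order_trans[OF residual_norm_le B(2)[OF that]] .
      ultimately show ?thesis
        using coupling_norm_le[OF that B(2)[OF that], of i] unfolding L_def by linarith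
    qed
    finally show ?thesis .
  qed
  show ?thesis
  proof (rule that)
    show "0 \<le> L" using B(1) A_nonneg k_gt_2 by (simp add: L_def)
    fix i s t assume "T \<le> s" "s \<le> t"
    show "norm (dq i t - dq i s) \<le> L * (t - s)"
    proof (rule norm_diff_le_if_vector_derivative_bound_off_finite[OF S_finite \<open>s \<le> t\<close>])
      show "continuous_on {s..t} (dq i)"
        by (rule continuous_on_subset[OF dq_cont]) (use \<open>T \<le> s\<close> in auto)
      show "0 \<le> L" by fact
    next
      fix x assume "x \<in> {s<..<t} - S \<inter> {s..t}"
      then have "T < x" "x \<notin> S" using \<open>T \<le> s\<close> by auto
      then show "(dq i has_vector_derivative - k *\<^sub>R dq i x - residual i x - coupling i x) (at x)"
        and "norm (- k *\<^sub>R dq i x - residual i x - coupling i x) \<le> L"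
        by (blast intro: dq_has_derivative acceleration_le less_imp_le)+
    qed
  qed
qed

lemma residual_Lipschitz:
  obtains L where "0 \<le> L"
    and "\<And>i s t. T \<le> s \<Longrightarrow> s \<le> t \<Longrightarrow> norm (residual i t - residual i s) \<le> L * (t - s)"
proof -
  obtain B where B: "0 \<le> B" "\<And>i t. T \<le> t \<Longrightarrow> norm (dq i t) \<le> B"
    using trajectory_bounded by metis
  have q_Lipschitz: "norm (q i t - q i s) \<le> B * (t - s)" if "T \<le> s" "s \<le> t" for i s t
  proof (rule norm_diff_le_if_vector_derivative_bound_off_finite[of "{}", OF _ \<open>s \<le> t\<close> _ _ _ B(1)])
    show "continuous_on {s..t} (q i)"
      by (rule continuous_on_subset[OF q_cont]) (use that in auto)
  next
    fix x assume "x \<in> {s<..<t} - {}"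
    then show "(q i has_vector_derivative dq i x) (at x)" and "norm (dq i x) \<le> B"
      using that by (auto intro!: q_deriv B(2))
  qed simp
  show ?thesis
  proof (rule that)
    show "0 \<le> 2 * B" using B(1) by simp
    fix i s t assume "T \<le> s" "s \<le> t"
    have "norm (residual i t - residual i s)
        \<le> norm (q i t - q i s) + norm (closest_point (X i) (q i t) - closest_point (X i) (q i s))"
      using norm_triangle_ineq4[of "q i t - q i s" "closest_point (X i) (q i t) - closest_point (X i) (q i s)"]
      by (simp add: residual_def algebra_simps)
    also have "\<dots> \<le> 2 * norm (q i t - q i s)"
      using closest_point_lipschitz[OF X_convex X_closed, of i "q i t" "q i s"] p_in_X
      by (auto simp: dist_norm)
    also have "\<dots> \<le> 2 * B * (t - s)"
      using q_Lipschitz[OF \<open>T \<le> s\<close> \<open>s \<le> t\<close>] by simp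
    finally show "norm (residual i t - residual i s) \<le> 2 * B * (t - s)" .
  qed
qed

lemma norm_sq_le_dissipation:
  "(norm (dq i t))\<^sup>2 \<le> dissipation t" "(norm (residual i t))\<^sup>2 \<le> dissipation t"
proof -
  have "(norm (dq i t))\<^sup>2 + (norm (residual i t))\<^sup>2 \<le> dissipation t"
    unfolding dissipation_def by (rule member_le_sum) simp_all
  then show "(norm (dq i t))\<^sup>2 \<le> dissipation t" "(norm (residual i t))\<^sup>2 \<le> dissipation t"
    using zero_le_power2[of "norm (dq i t)"] zero_le_power2[of "norm (residual i t)"] by linarith+
qed

lemma tendsto_zero_if_dominated_by_dissipation:
  fixes \<phi> :: "real \<Rightarrow> real"
  assumes "\<And>t. 0 \<le> \<phi> t" "\<And>t. (\<phi> t)\<^sup>2 \<le> dissipation t" "0 \<le> L"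
    and "\<And>s t. T \<le> s \<Longrightarrow> s \<le> t \<Longrightarrow> \<bar>\<phi> t - \<phi> s\<bar> \<le> L * (t - s)"
  shows "(\<phi> \<longlongrightarrow> 0) at_top"
proof (rule tendsto_zero_if_Lipschitz_and_energy_decay[OF energy_nonneg assms(1) assms(4,3) decay_rate_pos])
  fix a b c :: real
  assume "T \<le> a" "a \<le> b" "0 \<le> c" "\<forall>t\<in>{a..b}. c \<le> \<phi> t"
  moreover have "c\<^sup>2 \<le> dissipation t" if "0 \<le> c" "c \<le> \<phi> t" for t
    using power_mono[OF that(2,1), of 2] assms(2)[of t] by linarith
  ultimately show "energy b \<le> energy a - decay_rate * c\<^sup>2 * (b - a)"
    by (intro energy_decay) auto
qed

theorem velocity_tendsto_zero: "(dq i \<longlongrightarrow> 0) at_top"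
proof -
  obtain L where L: "0 \<le> L" "\<And>s t. T \<le> s \<Longrightarrow> s \<le> t \<Longrightarrow> norm (dq i t - dq i s) \<le> L * (t - s)"
    using velocity_Lipschitz by metis
  have "((\<lambda>t. norm (dq i t)) \<longlongrightarrow> 0) at_top"
    using norm_triangle_ineq3[of "dq i _" "dq i _"] L
    by (intro tendsto_zero_if_dominated_by_dissipation norm_sq_le_dissipation norm_ge_zero)
      (blast intro: order_trans)+
  then show ?thesis
    by (simp add: tendsto_norm_zero_iff)
qed

theorem infdist_tendsto_zero: "((\<lambda>t. infdist (q i t) (X i)) \<longlongrightarrow> 0) at_top"
proof -
  obtain L where L: "0 \<le> L" "\<And>s t. T \<le> s \<Longrightarrow> s \<le> t \<Longrightarrow> norm (residual i t - residual i s) \<le> L * (t - s)"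
    using residual_Lipschitz by metis
  have residual_tendsto: "((\<lambda>t. norm (residual i t)) \<longlongrightarrow> 0) at_top"
    using norm_triangle_ineq3[of "residual i _" "residual i _"] L
    by (intro tendsto_zero_if_dominated_by_dissipation norm_sq_le_dissipation norm_ge_zero)
      (blast intro: order_trans)+
  have "infdist (q i t) (X i) \<le> norm (residual i t)" for t
    using infdist_le[OF closest_point_in_set[OF X_closed], of i "q i t"] p_in_X
    by (auto simp: residual_def dist_norm)
  then show ?thesis
    by (intro tendsto_sandwich[OF _ _ tendsto_const residual_tendsto] always_eventually allI)
      (simp_all add: infdist_nonneg)
qed

end

lemma finite_switching_times:
  fixes ts :: "nat \<Rightarrow> real"
  assumes "0 < \<tau>" "\<And>l. ts l + \<tau> \<le> ts (Suc l)"
  shows "finite (range ts \<inter> {a..b})"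
proof -
  have lower: "ts 0 + real l * \<tau> \<le> ts l" for l
  proof (induction l)
    case (Suc l)
    then show ?case using assms(2)[of l] by (simp add: algebra_simps)
  qed simp
  have "range ts \<inter> {a..b} \<subseteq> ts ` {..nat \<lceil>(b - ts 0) / \<tau>\<rceil>}"
  proof
    fix x assume "x \<in> range ts \<inter> {a..b}"
    then obtain l where l: "x = ts l" "ts l \<le> b" by auto
    with lower[of l] assms(1) have "real l \<le> (b - ts 0) / \<tau>"
      by (simp add: field_simps)
    then have "l \<le> nat \<lceil>(b - ts 0) / \<tau>\<rceil>" by linarith
    then show "x \<in> ts ` {..nat \<lceil>(b - ts 0) / \<tau>\<rceil>}" using l by auto
  qed
  then show ?thesis by (rule finite_subset) simp
qed

lemma sym_pos_def_mult_vector_cancel: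
  assumes "sym_pos_def A" "A *v x = A *v y"
  shows "x = y"
proof (rule ccontr)
  assume "x \<noteq> y"
  then have "(x - y) \<bullet> (A *v (x - y)) > 0" using assms(1) by (simp add: sym_pos_def_def)
  moreover have "A *v (x - y) = 0" using assms(2) by (simp add: matrix_vector_mult_diff_distrib)
  ultimately show False by simp
qed

lemma closed_loop_acceleration:
  assumes "sym_pos_def M" "M *v a + c = c - k *\<^sub>R (M *v v) - M *v g - M *v h"
  shows "a = - k *\<^sub>R v - g - h"
proof (rule sym_pos_def_mult_vector_cancel[OF assms(1)])
  have "M *v a = (M *v a + c) - c"
    by simp
  also have "\<dots> = - k *\<^sub>R (M *v v) - M *v g - M *v h"
    unfolding assms(2) by simp
  also have "\<dots> = M *v (- k *\<^sub>R v - g - h)"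
    by (simp only: matrix_vector_mult_diff_distrib matrix_vector_mult_scaleR)
  finally show "M *v a = M *v (- k *\<^sub>R v - g - h)" .
qed

lemma gain_bounds:
  fixes k A :: real and n :: nat
  assumes "0 \<le> A" "2 + 4 * n * A < k"
  shows "2 < k" "8 * n * A \<le> k\<^sup>2"
proof -
  have "0 \<le> 4 * n * A"
    using assms(1) by simp
  with assms(2) show "2 < k"
    by linarith
  have "8 * n * A = (4 * n * A) * 2"
    by simp
  also have "\<dots> \<le> (4 * n * A) * k"
    using \<open>0 \<le> 4 * n * A\<close> \<open>2 < k\<close> by (intro mult_left_mono) auto
  also have "\<dots> \<le> k\<^sup>2"
    using assms(2) \<open>2 < k\<close> by (simp add: power2_eq_square mult_right_mono)
  finally show "8 * n * A \<le> k\<^sup>2" .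
qed

lemma lagrangian_trajectory_regularity:
  fixes M :: "'v \<Rightarrow> real^'m \<Rightarrow> real^'m^'m"
    and q dq ddq :: "'v \<Rightarrow> real \<Rightarrow> real^'m"
    and w :: "'v \<Rightarrow> 'v \<Rightarrow> real \<Rightarrow> real" and k t\<^sub>0 T :: real
  assumes M_spd: "\<And>i x. sym_pos_def (M i x)" and "t\<^sub>0 \<le> T"
    and q_deriv: "\<forall>i t. t \<ge> t\<^sub>0 \<longrightarrow> (q i has_vector_derivative dq i t) (at t within {t\<^sub>0..})"
    and dq_cont: "\<forall>i. continuous_on {t\<^sub>0..} (dq i)"
    and dynamics: "\<forall>i t. t \<ge> t\<^sub>0 \<longrightarrow> t \<notin> S \<longrightarrow>
          (dq i has_vector_derivative ddq i t) (at t) \<and>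
          M i (q i t) *v ddq i t + C i (q i t) (dq i t) *v dq i t =
            C i (q i t) (dq i t) *v dq i t
            - k *\<^sub>R (M i (q i t) *v dq i t)
            - M i (q i t) *v (q i t - closest_point (X i) (q i t))
            - M i (q i t) *v (\<Sum>j\<in>nbrs (E t) i. w i j t *\<^sub>R (q i t - q j t))"
  shows "continuous_on {T..} (q i)" and "continuous_on {T..} (dq i)"
    and "T < t \<Longrightarrow> (q i has_vector_derivative dq i t) (at t)"
    and "T < t \<Longrightarrow> t \<notin> S \<Longrightarrow> (dq i has_vector_derivative - k *\<^sub>R dq i t
      - (q i t - closest_point (X i) (q i t)) - (\<Sum>j\<in>nbrs (E t) i. w i j t *\<^sub>R (q i t - q j t))) (at t)"
proof -
  have "{T..} \<subseteq> {t\<^sub>0..}"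
    using \<open>t\<^sub>0 \<le> T\<close> by auto
  show "continuous_on {T..} (q i)"
    using q_deriv by (intro continuous_on_subset[OF continuous_on_vector_derivative \<open>{T..} \<subseteq> {t\<^sub>0..}\<close>]) auto
  show "continuous_on {T..} (dq i)"
    using dq_cont by (intro continuous_on_subset[OF _ \<open>{T..} \<subseteq> {t\<^sub>0..}\<close>]) auto
  show "(q i has_vector_derivative dq i t) (at t)" if "T < t"
  proof -
    have "at t within {t\<^sub>0..} = at t"
      using that \<open>t\<^sub>0 \<le> T\<close> by (intro at_within_interior) simp
    with q_deriv that \<open>t\<^sub>0 \<le> T\<close> show ?thesis
      by (metis less_imp_le order_trans)
  qed
  show "(dq i has_vector_derivative - k *\<^sub>R dq i t - (q i t - closest_point (X i) (q i t))
      - (\<Sum>j\<in>nbrs (E t) i. w i j t *\<^sub>R (q i t - q j t))) (at t)" if "T < t" "t \<notin> S"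
  proof -
    have "t\<^sub>0 \<le> t"
      using that \<open>t\<^sub>0 \<le> T\<close> by simp
    with dynamics that(2) have deriv: "(dq i has_vector_derivative ddq i t) (at t)"
      and eq: "M i (q i t) *v ddq i t + C i (q i t) (dq i t) *v dq i t =
        C i (q i t) (dq i t) *v dq i t - k *\<^sub>R (M i (q i t) *v dq i t)
        - M i (q i t) *v (q i t - closest_point (X i) (q i t))
        - M i (q i t) *v (\<Sum>j\<in>nbrs (E t) i. w i j t *\<^sub>R (q i t - q j t))"
      by blast+
    from deriv show ?thesis
      unfolding closed_loop_acceleration[OF M_spd eq] .
  qed
qed

lemma lagrangian_consensus_convergence:
  fixes X :: "'v::finite \<Rightarrow> (real^'m) set"
    and M :: "'v \<Rightarrow> real^'m \<Rightarrow> real^'m^'m"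
    and q dq ddq :: "'v \<Rightarrow> real \<Rightarrow> real^'m"
    and ts :: "nat \<Rightarrow> real" and t\<^sub>0 \<tau>d a_up k :: real
    and a :: "'v \<Rightarrow> 'v \<Rightarrow> real \<Rightarrow> real"
  assumes M_spd: "\<And>i x. sym_pos_def (M i x)"
    and X_closed: "\<And>i. closed (X i)" and X_convex: "\<And>i. convex (X i)" and p_in_X: "\<And>i. p \<in> X i"
    and graphs: "\<And>t. t \<ge> t\<^sub>0 \<Longrightarrow> undirected_graph (\<sigma> t)"
    and "\<tau>d > 0" and dwell: "\<And>l. ts (Suc l) - ts l \<ge> \<tau>d"
    and a_sym: "\<And>i j t. a i j t = a j i t"
    and a_range: "\<And>i j t. t \<ge> 0 \<Longrightarrow> 0 \<le> a i j t \<and> a i j t \<le> a_up"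
    and k: "2 + 4 * CARD('v) * a_up < k"
    and q_deriv: "\<forall>i t. t \<ge> t\<^sub>0 \<longrightarrow> (q i has_vector_derivative dq i t) (at t within {t\<^sub>0..})"
    and dq_cont: "\<forall>i. continuous_on {t\<^sub>0..} (dq i)"
    and dynamics: "\<forall>i t. t \<ge> t\<^sub>0 \<longrightarrow> t \<notin> range ts \<longrightarrow>
          (dq i has_vector_derivative ddq i t) (at t) \<and>
          M i (q i t) *v ddq i t + C i (q i t) (dq i t) *v dq i t =
            C i (q i t) (dq i t) *v dq i t
            - k *\<^sub>R (M i (q i t) *v dq i t)
            - M i (q i t) *v (q i t - closest_point (X i) (q i t))
            - M i (q i t) *v (\<Sum>j\<in>nbrs (\<sigma> t) i. a i j t *\<^sub>R (q i t - q j t))"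
  shows "((\<lambda>t. infdist (q i t) (X i)) \<longlongrightarrow> 0) at_top" and "(dq i \<longlongrightarrow> 0) at_top"
proof -
  define T where "T = max t\<^sub>0 0"
  have "t\<^sub>0 \<le> T" "0 \<le> T"
    by (simp_all add: T_def)
  note regularity = lagrangian_trajectory_regularity[OF M_spd \<open>t\<^sub>0 \<le> T\<close> q_deriv dq_cont dynamics]
  have "0 \<le> a_up"
    using a_range[of 0] by (blast intro: order_trans)
  interpret projected_consensus X p \<sigma> a a_up k T "range ts" q dq
  proof (unfold_locales; (rule regularity gain_bounds[OF \<open>0 \<le> a_up\<close> k])?)
    show "\<sigma> t i j = \<sigma> t j i" if "T \<le> t" for t i j
      using graphs[of t] that \<open>t\<^sub>0 \<le> T\<close> by (simp add: undirected_graph_def)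
    show "0 \<le> a i j t" "a i j t \<le> a_up" if "T \<le> t" for i j t
      using a_range[of t i j] that \<open>0 \<le> T\<close> by simp_all
    show "finite (range ts \<inter> {a..b})" for a b
      using finite_switching_times[OF \<open>\<tau>d > 0\<close>] dwell by (simp add: algebra_simps)
  qed (use X_closed X_convex p_in_X a_sym in auto)
  show "((\<lambda>t. infdist (q i t) (X i)) \<longlongrightarrow> 0) at_top" "(dq i \<longlongrightarrow> 0) at_top"
    by (rule infdist_tendsto_zero, rule velocity_tendsto_zero)
qed

theorem proposition1:
  fixes X :: "'v::finite \<Rightarrow> (real^'m) set"
    and M :: "'v \<Rightarrow> real^'m \<Rightarrow> real^'m^'m"
    and C :: "'v \<Rightarrow> real^'m \<Rightarrow> real^'m \<Rightarrow> real^'m^'m"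
    and P :: "('v \<Rightarrow> 'v \<Rightarrow> bool) set"
    and \<sigma> :: "real \<Rightarrow> ('v \<Rightarrow> 'v \<Rightarrow> bool)"
    and ts :: "nat \<Rightarrow> real"
    and t0 \<tau>d a_low a_up :: real
    and a :: "'v \<Rightarrow> 'v \<Rightarrow> real \<Rightarrow> real"
  assumes M_spd: "\<And>i x. sym_pos_def (M i x)"
    and X_closed: "\<And>i. closed (X i)" and X_convex: "\<And>i. convex (X i)"
    and X0_ne: "(\<Inter>i. X i) \<noteq> {}" and X0_bdd: "bounded (\<Inter>i. X i)"
    and P_fin: "finite P" and P_graphs: "\<And>G. G \<in> P \<Longrightarrow> undirected_graph G"
    and \<sigma>_P: "\<And>t. t \<ge> t0 \<Longrightarrow> \<sigma> t \<in> P"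
    and ts0: "ts 0 = t0"
    and \<tau>d_pos: "\<tau>d > 0"
    and dwell: "\<And>l. ts (Suc l) - ts l \<ge> \<tau>d"
    and \<sigma>_pc: "\<And>l t. ts l \<le> t \<Longrightarrow> t < ts (Suc l) \<Longrightarrow> \<sigma> t = \<sigma> (ts l)"
    and a_pos: "a_low > 0" "a_up > 0"
    and a_sym: "\<And>i j t. a i j t = a j i t"
    and a_cont: "\<And>i j. continuous_on {t0..} (a i j)"
    and a_bnd: "\<And>i j t. t \<ge> 0 \<Longrightarrow> a_low \<le> a i j t \<and> a i j t \<le> a_up"
  shows "\<exists>K>0. \<forall>k>K. \<forall>(q :: 'v \<Rightarrow> real \<Rightarrow> real^'m) dq ddq.
     ((\<forall>i t. t \<ge> t0 \<longrightarrow> (q i has_vector_derivative dq i t) (at t within {t0..})) \<and>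
      (\<forall>i. continuous_on {t0..} (dq i)) \<and>
      (\<forall>i t. t \<ge> t0 \<longrightarrow> t \<notin> range ts \<longrightarrow>
          (dq i has_vector_derivative ddq i t) (at t) \<and>
          M i (q i t) *v ddq i t + C i (q i t) (dq i t) *v dq i t =
            C i (q i t) (dq i t) *v dq i t
            - k *\<^sub>R (M i (q i t) *v dq i t)
            - M i (q i t) *v (q i t - closest_point (X i) (q i t))
            - M i (q i t) *v (\<Sum>j\<in>nbrs (\<sigma> t) i. a i j t *\<^sub>R (q i t - q j t))))
     \<longrightarrow> (\<forall>i. ((\<lambda>t. infdist (q i t) (X i)) \<longlongrightarrow> 0) at_top \<and> (dq i \<longlongrightarrow> 0) at_top)"
proof -
  obtain p where p: "\<And>i. p \<in> X i"
    using X0_ne by blast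
  have a_range: "\<And>i j t. t \<ge> 0 \<Longrightarrow> 0 \<le> a i j t \<and> a i j t \<le> a_up"
    using a_bnd a_pos by (meson less_le_trans less_imp_le)
  have graphs: "\<And>t. t \<ge> t0 \<Longrightarrow> undirected_graph (\<sigma> t)"
    using P_graphs \<sigma>_P by blast
  note convergence = lagrangian_consensus_convergence[where M = M and X = X and p = p and \<sigma> = \<sigma>
      and a = a and a_up = a_up and ts = ts and \<tau>d = \<tau>d and t\<^sub>0 = t0,
      OF M_spd X_closed X_convex p graphs \<tau>d_pos dwell a_sym a_range]
  show ?thesis
  proof (intro exI[of _ "2 + 4 * CARD('v) * a_up"] conjI allI impI; (elim conjE)?)
    show "0 < 2 + 4 * CARD('v) * a_up"
      using a_pos by (simp add: add_pos_nonneg)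
  qed (rule convergence; assumption)+
qed

end
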